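(* Suppose the weight sequence $\mathbf{w}$ has type II or III. Then there is a sequence $t_n\to0$ such that $\Pr{\tilde D_n\le(1-\mu+t_n)n}\to1$ as $n\to\infty$; that is, $\tilde D_n\le(1-\mu+o(1))n$ with probability tending to $1$.
   Context: A weight sequence $\mathbf{w}=(\omega_k)_{k\ge0}$ consists of non-negative reals with $\omega_0>0$ and $\omega_k>0$ for some $k\ge2$; $\mathcal{T}_n$ is the random plane tree with $n$ vertices drawn with probability proportional to $\prod_v\omega_{d^+(v)}$ ($n\equiv1\bmod\gcd\{i:\omega_i>0\}$), with root $o$. Let $\phi(z)=\sum_k\omega_kz^k$ with radius $\rho_\phi$, $\psi(t)=t\phi'(t)/\phi(t)$, $\nu=\lim_{t\nearrow\rho_\phi}\psi(t)$ when $\rho_\phi>0$. Type II: $\rho_\phi>0$, $0<\nu<1$, $\tau=\rho_\phi$. Type III: $\rho_\phi=0$, $\tau=\nu=0$. $\xi$ has law $\Pr{\xi=k}=\tau^k\omega_k/\phi(\tau)$, and $\mu=\mathbb{E}\xi=\min(\nu,1)$ (so $\mu=\nu$ in types II/III). Let $N_k$ be the number of vertices of $\mathcal{T}_n$ with outdegree $k$. $(\Omega_n)$ is a fixed deterministic sequence with $\Omega_n\to\infty$, $\Omega_n=o(n)$, such that for every $K_n\to\infty$ with $K_n\le\Omega_n$: $\sum_{k\le K_n}kN_k=\mu n+o_p(n)$ and $\sum_{k>K_n}kN_k=(1-\mu)n+o_p(n)$. $\tilde D_n$ is a random integer with the law of $d^+_{\mathcal{T}_n}(o)$ conditioned on $d^+_{\mathcal{T}_n}(o)>\Omega_n$.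 *)

theory Defs
  imports "HOL-Analysis.Analysis"
begin

datatype ptree = Node "ptree list"

fun nverts :: "ptree \<Rightarrow> nat" where
  "nverts (Node ts) = 1 + sum_list (map nverts ts)"

fun rootdeg :: "ptree \<Rightarrow> nat" where
  "rootdeg (Node ts) = length ts"

fun twt :: "(nat \<Rightarrow> real) \<Rightarrow> ptree \<Rightarrow> real" where
  "twt \<omega> (Node ts) = \<omega> (length ts) * prod_list (map (twt \<omega>) ts)"

fun Ncount :: "nat \<Rightarrow> ptree \<Rightarrow> nat" where
  "Ncount k (Node ts) = (if length ts = k then 1 else 0) + sum_list (map (Ncount k) ts)"

definition ptrees :: "nat \<Rightarrow> ptree set" where
  "ptrees n = {T. nverts T = n}"

definition tprob :: "(nat \<Rightarrow> real) \<Rightarrow> nat \<Rightarrow> (ptree \<Rightarrow> bool) \<Rightarrow> real" where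
  "tprob \<omega> n P = (\<Sum>T\<in>{T\<in>ptrees n. P T}. twt \<omega> T) / (\<Sum>T\<in>ptrees n. twt \<omega> T)"

definition weight_seq :: "(nat \<Rightarrow> real) \<Rightarrow> bool" where
  "weight_seq \<omega> \<longleftrightarrow> (\<forall>k. 0 \<le> \<omega> k) \<and> 0 < \<omega> 0 \<and> (\<exists>k\<ge>2. 0 < \<omega> k)"

definition wspan :: "(nat \<Rightarrow> real) \<Rightarrow> nat" where
  "wspan \<omega> = Gcd {i. 0 < \<omega> i}"

definition gen_phi :: "(nat \<Rightarrow> real) \<Rightarrow> real \<Rightarrow> real" where
  "gen_phi \<omega> t = (\<Sum>k. \<omega> k * t ^ k)"

definition gen_psi :: "(nat \<Rightarrow> real) \<Rightarrow> real \<Rightarrow> real" where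
  "gen_psi \<omega> t = t * deriv (gen_phi \<omega>) t / gen_phi \<omega> t"

definition rho_phi :: "(nat \<Rightarrow> real) \<Rightarrow> ereal" where
  "rho_phi \<omega> = conv_radius \<omega>"

definition typeII_nu :: "(nat \<Rightarrow> real) \<Rightarrow> real \<Rightarrow> bool" where
  "typeII_nu \<omega> \<nu> \<longleftrightarrow> 0 < rho_phi \<omega> \<and> rho_phi \<omega> < \<infinity> \<and>
     (gen_psi \<omega> \<longlongrightarrow> \<nu>) (at_left (real_of_ereal (rho_phi \<omega>))) \<and> 0 < \<nu> \<and> \<nu> < 1"

definition typeIII :: "(nat \<Rightarrow> real) \<Rightarrow> bool" where
  "typeIII \<omega> \<longleftrightarrow> rho_phi \<omega> = 0"

end

theory Submission
  imports Defs
begin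

text \<open>Rerooting the weighted random tree at a vertex of outdegree \<open>k\<close> shows
  \<open>k E[N\<^sub>k] = (n - 1) P(d\<^sup>+(o) = k)\<close>, so the tail sum \<open>H = \<Sum>\<^sub>k\<^sub>>\<^sub>\<Omega> k N\<^sub>k\<close> has
  mean \<open>(n - 1) P(d\<^sup>+(o) > \<Omega>)\<close>.  Since \<open>H\<close> concentrates at \<open>(1 - \<mu>) n\<close> with \<open>\<mu> < 1\<close>,
  this keeps \<open>P(d\<^sup>+(o) > \<Omega>)\<close> bounded away from \<open>0\<close>.  On that event the root alone
  contributes \<open>d\<^sup>+(o)\<close> to \<open>H\<close>, so \<open>d\<^sup>+(o) > (1 - \<mu> + t) n\<close> forces a deviation of \<open>H\<close>
  of size \<open>t n\<close>; a diagonal choice \<open>t = t\<^sub>n \<longrightarrow> 0\<close> makes this negligible relative to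
  \<open>P(d\<^sup>+(o) > \<Omega>)\<close>.  That the conditioning event has positive probability at all (for large
  \<open>n \<equiv> 1\<close> mod the span) comes from the fact that the sums of positive outdegrees of positive
  weight contain all large multiples of their gcd.\<close>

lemma nverts_ge_1: "1 \<le> nverts T"
  by (cases T) auto

lemma length_le_sum_nverts: "length ts \<le> sum_list (map nverts ts)"
proof (induction ts)
  case (Cons t ts)
  then show ?case using nverts_ge_1[of t] by simp
qed simp

lemma rootdeg_less_nverts: "rootdeg T < nverts T"
proof (cases T)
  case (Node ts)
  then show ?thesis using length_le_sum_nverts[of ts] by simp
qed

lemma ptrees_0: "ptrees 0 = {}"
proof -
  have "nverts T \<noteq> 0" for T
    using nverts_ge_1[of T] by simp
  then show ?thesis by (auto simp: ptrees_def)
qed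

lemma ptrees_1: "ptrees 1 = {Node []}"
proof -
  have "T = Node []" if "nverts T = 1" for T
  proof (cases T)
    case (Node ts)
    have "length ts \<le> nverts T - 1"
      using Node length_le_sum_nverts[of ts] by simp
    with that have "ts = []" by simp
    with Node show ?thesis by simp
  qed
  then show ?thesis by (auto simp: ptrees_def)
qed

lemma finite_ptrees: "finite (ptrees n)"
proof (induction n rule: less_induct)
  case (less n)
  show ?case
  proof (cases n)
    case 0
    then show ?thesis by (simp add: ptrees_0)
  next
    case (Suc m)
    let ?U = "\<Union>a\<le>m. ptrees a"
    have "ptrees n \<subseteq> Node ` {ts. set ts \<subseteq> ?U \<and> length ts \<le> m}"
    proof
      fix T assume "T \<in> ptrees n"
      then obtain ts where T: "T = Node ts" and s: "1 + sum_list (map nverts ts) = n"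
        by (cases T) (auto simp: ptrees_def)
      have "nverts t \<le> m" if "t \<in> set ts" for t
        using s Suc member_le_sum_list[of "nverts t" "map nverts ts"] that by auto
      then show "T \<in> Node ` {ts. set ts \<subseteq> ?U \<and> length ts \<le> m}"
        using T s Suc length_le_sum_nverts[of ts] by (auto simp: ptrees_def)
    qed
    moreover have "finite {ts. set ts \<subseteq> ?U \<and> length ts \<le> m}"
      using less Suc by (intro finite_lists_length_le) auto
    ultimately show ?thesis by (meson finite_imageI finite_subset)
  qed
qed

lemma twt_nonneg: "(\<And>k. 0 \<le> \<omega> k) \<Longrightarrow> 0 \<le> twt \<omega> T"
  by (induction T) (auto intro!: prod_list_nonneg mult_nonneg_nonneg)

subsection \<open>Positions, subtrees and grafting\<close>

fun valid_path :: "ptree \<Rightarrow> nat list \<Rightarrow> bool" where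
  "valid_path (Node ts) [] = True"
| "valid_path (Node ts) (i # p) = (i < length ts \<and> valid_path (ts ! i) p)"

fun subtree_at :: "ptree \<Rightarrow> nat list \<Rightarrow> ptree" where
  "subtree_at (Node ts) [] = Node ts"
| "subtree_at (Node ts) (i # p) = subtree_at (ts ! i) p"

fun graft :: "ptree \<Rightarrow> nat list \<Rightarrow> ptree \<Rightarrow> ptree" where
  "graft (Node ts) [] S = S"
| "graft (Node ts) (i # p) S = Node (ts[i := graft (ts ! i) p S])"

definition positions :: "ptree \<Rightarrow> nat list set" where
  "positions T = {p. valid_path T p}"

lemma valid_path_Nil [simp]: "valid_path T []"
  by (cases T) auto

lemma subtree_at_Nil [simp]: "subtree_at T [] = T"
  by (cases T) auto

lemma graft_Nil [simp]: "graft T [] S = S"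
  by (cases T) auto

lemma valid_path_singleton: "valid_path T [i] \<longleftrightarrow> i < rootdeg T"
  by (cases T) auto

lemma rootdeg_graft_Cons: "rootdeg (graft T (i # p) S) = rootdeg T"
  by (cases T) auto

lemma valid_path_append: "valid_path T (p @ q) \<longleftrightarrow> valid_path T p \<and> valid_path (subtree_at T p) q"
proof (induction p arbitrary: T)
  case (Cons i p)
  then show ?case by (cases T) auto
qed simp

lemma valid_path_graft: "valid_path T p \<Longrightarrow> valid_path (graft T p S) (p @ q) = valid_path S q"
proof (induction p arbitrary: T)
  case (Cons i p)
  then show ?case by (cases T) auto
qed simp

lemma subtree_at_graft: "valid_path T p \<Longrightarrow> subtree_at (graft T p S) (p @ q) = subtree_at S q"
proof (induction p arbitrary: T)
  case (Cons i p)
  then show ?case by (cases T) auto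
qed simp

lemma graft_graft: "valid_path T p \<Longrightarrow> graft (graft T p S) p S' = graft T p S'"
proof (induction p arbitrary: T)
  case (Cons i p)
  then show ?case by (cases T) auto
qed simp

lemma graft_subtree_at: "valid_path T p \<Longrightarrow> graft T p (subtree_at T p) = T"
proof (induction p arbitrary: T)
  case (Cons i p)
  then show ?case by (cases T) auto
qed simp

lemma valid_path_graft_self: "valid_path T p \<Longrightarrow> valid_path (graft T p S) p"
  using valid_path_graft[where q = "[]"] by simp

lemma subtree_at_graft_self: "valid_path T p \<Longrightarrow> subtree_at (graft T p S) p = S"
  using subtree_at_graft[where q = "[]"] by simp

lemma nverts_graft:
  "valid_path T p \<Longrightarrow> nverts (graft T p S) + nverts (subtree_at T p) = nverts T + nverts S"
proof (induction p arbitrary: T)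
  case (Cons i p)
  obtain ts where T: "T = Node ts" by (cases T)
  with Cons have i: "i < length ts" and IH:
    "nverts (graft (ts ! i) p S) + nverts (subtree_at (ts ! i) p) = nverts (ts ! i) + nverts S"
    by auto
  have "sum_list ((map nverts ts)[i := nverts (graft (ts ! i) p S)]) + nverts (ts ! i)
      = sum_list (map nverts ts) + nverts (graft (ts ! i) p S)"
    using i elem_le_sum_list[of i "map nverts ts"] by (simp add: sum_list_update)
  with T i IH show ?case by (simp add: map_update)
qed simp

lemma twt_graft:
  "valid_path T p \<Longrightarrow> twt \<omega> (graft T p S) * twt \<omega> (subtree_at T p) = twt \<omega> T * twt \<omega> S"
proof (induction p arbitrary: T)
  case (Cons i p)
  obtain ts where T: "T = Node ts" by (cases T)
  with Cons have i: "i < length ts" and IH: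
    "twt \<omega> (graft (ts ! i) p S) * twt \<omega> (subtree_at (ts ! i) p) = twt \<omega> (ts ! i) * twt \<omega> S"
    by auto
  let ?xs = "map (twt \<omega>) ts"
  have split: "prod_list (?xs[i := x]) = prod_list (take i ?xs @ drop (Suc i) ?xs) * x" for x
    using i by (simp add: upd_conv_take_nth_drop)
  have "prod_list ?xs = prod_list (take i ?xs @ drop (Suc i) ?xs) * twt \<omega> (ts ! i)"
    using split[of "twt \<omega> (ts ! i)"] i by (metis length_map list_update_id nth_map)
  with T i IH split show ?case by (simp add: map_update algebra_simps)
qed simp
lemma positions_Node: "positions (Node ts) = insert [] (\<Union>i<length ts. (#) i ` positions (ts ! i))"
proof -
  have "p \<in> positions (Node ts) \<longleftrightarrow> p \<in> insert [] (\<Union>i<length ts. (#) i ` positions (ts ! i))" for p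
    by (cases p) (auto simp: positions_def)
  then show ?thesis by blast
qed

lemma card_UN_Cons_image:
  fixes n :: nat
  assumes "\<And>i. i < n \<Longrightarrow> finite (A i)"
  shows "card (\<Union>i<n. (#) i ` A i) = (\<Sum>i<n. card (A i))"
proof -
  have "card (\<Union>i<n. (#) i ` A i) = (\<Sum>i<n. card ((#) i ` A i))"
    by (rule card_UN_disjoint) (use assms in auto)
  also have "\<dots> = (\<Sum>i<n. card (A i))"
    by (simp add: card_image)
  finally show ?thesis .
qed

lemma finite_positions [simp]: "finite (positions T)"
  by (induction T) (auto simp: positions_Node)

lemma card_positions: "card (positions T) = nverts T"
proof (induction T)
  case (Node ts)
  have "[] \<notin> (\<Union>i<length ts. (#) i ` positions (ts ! i))" by auto
  with Node show ?case
    by (simp add: positions_Node card_UN_Cons_image sum_list_sum_nth atLeast0LessThan)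
qed

lemma Ncount_eq_card: "Ncount k T = card {p \<in> positions T. rootdeg (subtree_at T p) = k}"
proof (induction T)
  case (Node ts)
  let ?A = "\<lambda>t. {p \<in> positions t. rootdeg (subtree_at t p) = k}"
  have "?A (Node ts) = (if length ts = k then {[]} else {}) \<union> (\<Union>i<length ts. (#) i ` ?A (ts ! i))"
    by (auto simp: positions_Node)
  moreover have "[] \<notin> (\<Union>i<length ts. (#) i ` ?A (ts ! i))" by auto
  ultimately show ?case using Node
    by (simp add: card_UN_Cons_image sum_list_sum_nth atLeast0LessThan card_insert_if)
qed

lemma card_nonroot_positions: "card (positions T - {[]}) = nverts T - 1"
proof -
  have "[] \<in> positions T" by (simp add: positions_def)
  then show ?thesis by (simp add: card_Diff_singleton card_positions)
qed

subsection \<open>The rerooting identity\<close>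

definition ptree_pairs :: "nat \<Rightarrow> (ptree \<times> ptree) set" where
  "ptree_pairs n = {(T, T'). nverts T + nverts T' = n}"

lemma ptree_pairs_eq: "ptree_pairs n = (\<Union>a\<le>n. ptrees a \<times> ptrees (n - a))"
  by (auto simp: ptree_pairs_def ptrees_def)

lemma finite_ptree_pairs: "finite (ptree_pairs n)"
  by (simp add: ptree_pairs_eq finite_ptrees)

lemma sum_ptree_pairs_product:
  fixes f g :: "ptree \<Rightarrow> real"
  shows "(\<Sum>(T, T')\<in>ptree_pairs n. f T * g T') =
    (\<Sum>a\<le>n. (\<Sum>T\<in>ptrees a. f T) * (\<Sum>T'\<in>ptrees (n - a). g T'))"
proof -
  have "(\<Sum>(T, T')\<in>ptree_pairs n. f T * g T') = (\<Sum>a\<le>n. \<Sum>(T, T')\<in>ptrees a \<times> ptrees (n - a). f T * g T')"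
    unfolding ptree_pairs_eq
    by (rule sum.UNION_disjoint) (use finite_ptrees in \<open>auto simp: ptrees_def\<close>)
  also have "\<dots> = (\<Sum>a\<le>n. (\<Sum>T\<in>ptrees a. f T) * (\<Sum>T'\<in>ptrees (n - a). g T'))"
    by (simp add: sum_product sum.cartesian_product)
  finally show ?thesis .
qed

lemma sum_card_mult_eq_if_bij_Sigma:
  fixes f :: "'a \<Rightarrow> real"
  assumes "bij_betw h (Sigma A B) (Sigma A C)" "finite A"
    and "\<And>x. x \<in> A \<Longrightarrow> finite (B x)" "\<And>x. x \<in> A \<Longrightarrow> finite (C x)"
    and "\<And>y. y \<in> Sigma A B \<Longrightarrow> f (fst (h y)) = f (fst y)"
  shows "(\<Sum>x\<in>A. real (card (B x)) * f x) = (\<Sum>x\<in>A. real (card (C x)) * f x)"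
proof -
  have "(\<Sum>x\<in>A. real (card (B x)) * f x) = (\<Sum>x\<in>A. \<Sum>y\<in>B x. f x)"
    by simp
  also have "\<dots> = (\<Sum>y\<in>Sigma A B. f (fst y))"
    using assms(2,3) sum.Sigma[of A B "\<lambda>x y. f x"] by (simp add: split_def)
  also have "\<dots> = (\<Sum>y\<in>Sigma A B. f (fst (h y)))"
    using assms(5) by simp
  also have "\<dots> = (\<Sum>z\<in>Sigma A C. f (fst z))"
    by (rule sum.reindex_bij_betw[OF assms(1)])
  also have "\<dots> = (\<Sum>x\<in>A. \<Sum>y\<in>C x. f x)"
    using assms(2,4) sum.Sigma[of A C "\<lambda>x y. f x"] by (simp add: split_def)
  also have "\<dots> = (\<Sum>x\<in>A. real (card (C x)) * f x)"
    by simp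
  finally show ?thesis .
qed

text \<open>Cutting \<open>T\<close> at a vertex \<open>p\<close> and grafting \<open>T'\<close> there turns a pair with a marked vertex of
  outdegree \<open>k\<close> in the first tree into a pair whose first tree has root degree \<open>k\<close>, preserving
  total size and weight.  Summing over pairs avoids having to divide by the weight of \<open>T'\<close>;
  the pair sums are convolutions, undone by \<open>convolution_eq_0_imp_eq_0\<close>.\<close>

lemma bij_betw_cut_at_vertex:
  "bij_betw (\<lambda>((T, T'), p). ((subtree_at T p, graft T p T'), p))
    (SIGMA (T, T'):ptree_pairs n. {p \<in> positions T. rootdeg (subtree_at T p) = k})
    (SIGMA (T, T'):ptree_pairs n. if rootdeg T = k then positions T' else {})"
  (is "bij_betw ?h ?A ?B")
proof (rule bij_betw_byWitness[where f' = "\<lambda>((T, T'), p). ((graft T' p T, subtree_at T' p), p)"])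
  show "\<forall>y\<in>?A. (\<lambda>((T, T'), p). ((graft T' p T, subtree_at T' p), p)) (?h y) = y"
    by (auto simp: positions_def graft_graft graft_subtree_at subtree_at_graft_self)
  show "\<forall>y\<in>?B. ?h ((\<lambda>((T, T'), p). ((graft T' p T, subtree_at T' p), p)) y) = y"
    by (auto simp: positions_def graft_graft graft_subtree_at subtree_at_graft_self split: if_splits)
  show "?h ` ?A \<subseteq> ?B"
  proof
    fix y assume "y \<in> ?h ` ?A"
    then obtain T T' p where "y = ((subtree_at T p, graft T p T'), p)" "(T, T') \<in> ptree_pairs n"
      "valid_path T p" "rootdeg (subtree_at T p) = k"
      by (auto simp: positions_def)
    then show "y \<in> ?B"
      using valid_path_graft_self[of T p T'] nverts_graft[of T p T']
      by (auto simp: positions_def ptree_pairs_def)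
  qed
  show "(\<lambda>((T, T'), p). ((graft T' p T, subtree_at T' p), p)) ` ?B \<subseteq> ?A"
    using nverts_graft valid_path_graft_self subtree_at_graft_self
    by (fastforce simp: positions_def ptree_pairs_def split: if_splits)
qed

lemma sum_ptree_pairs_Ncount:
  "(\<Sum>(T, T')\<in>ptree_pairs n. real (Ncount k T) * (twt \<omega> T * twt \<omega> T')) =
   (\<Sum>(T, T')\<in>ptree_pairs n. real (if rootdeg T = k then nverts T' else 0) * (twt \<omega> T * twt \<omega> T'))"
proof -
  have "(\<Sum>x\<in>ptree_pairs n. real (card (case x of (T, T') \<Rightarrow>
          {p \<in> positions T. rootdeg (subtree_at T p) = k})) * (case x of (T, T') \<Rightarrow> twt \<omega> T * twt \<omega> T')) =
      (\<Sum>x\<in>ptree_pairs n. real (card (case x of (T, T') \<Rightarrow>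
          if rootdeg T = k then positions T' else {})) * (case x of (T, T') \<Rightarrow> twt \<omega> T * twt \<omega> T'))"
  proof (rule sum_card_mult_eq_if_bij_Sigma[OF bij_betw_cut_at_vertex])
    fix y assume "y \<in> (SIGMA (T, T'):ptree_pairs n. {p \<in> positions T. rootdeg (subtree_at T p) = k})"
    then obtain T T' p where "y = ((T, T'), p)" "valid_path T p"
      by (auto simp: positions_def)
    then show "(case fst ((\<lambda>((T, T'), p). ((subtree_at T p, graft T p T'), p)) y) of
        (T, T') \<Rightarrow> twt \<omega> T * twt \<omega> T') = (case fst y of (T, T') \<Rightarrow> twt \<omega> T * twt \<omega> T')"
      using twt_graft[of T p \<omega> T'] by (simp add: mult.commute)
  qed (auto simp: finite_ptree_pairs)
  moreover have "card (if rootdeg T = k then positions T' else {}) = (if rootdeg T = k then nverts T' else 0)"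
    for T T' :: ptree
    by (simp add: card_positions)
  ultimately show ?thesis
    by (simp add: Ncount_eq_card split_def)
qed

lemma bij_betw_cut_at_child:
  "bij_betw (\<lambda>((T, T'), p). ((graft T [hd p] T', subtree_at T [hd p]), (hd p, tl p)))
    (SIGMA (T, T'):ptree_pairs n. if rootdeg T = k then positions T - {[]} else {})
    (SIGMA (T, T'):ptree_pairs n. if rootdeg T = k then {..<k} \<times> positions T' else {})"
  (is "bij_betw ?h ?A ?B")
proof (rule bij_betw_byWitness[where f' = "\<lambda>((T, T'), (i, q)). ((graft T [i] T', subtree_at T [i]), i # q)"])
  show "\<forall>y\<in>?A. (\<lambda>((T, T'), (i, q)). ((graft T [i] T', subtree_at T [i]), i # q)) (?h y) = y"
  proof
    fix y assume "y \<in> ?A"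
    then obtain T T' i q where y: "y = ((T, T'), i # q)" and "valid_path T (i # q)"
      by (cases y; cases "snd y") (auto simp: positions_def split: if_splits)
    then have "valid_path T [i]" using valid_path_append[of T "[i]" q] by simp
    with y show "(\<lambda>((T, T'), (i, q)). ((graft T [i] T', subtree_at T [i]), i # q)) (?h y) = y"
      by (simp add: graft_graft graft_subtree_at subtree_at_graft_self)
  qed
  show "\<forall>y\<in>?B. ?h ((\<lambda>((T, T'), (i, q)). ((graft T [i] T', subtree_at T [i]), i # q)) y) = y"
    by (auto simp: valid_path_singleton graft_graft graft_subtree_at subtree_at_graft_self
        split: if_splits)
  show "?h ` ?A \<subseteq> ?B"
  proof
    fix y assume "y \<in> ?h ` ?A"
    then obtain T T' i q where y: "y = ?h ((T, T'), i # q)" and v: "valid_path T (i # q)"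
      and P: "(T, T') \<in> ptree_pairs n" and r: "rootdeg T = k"
      by (auto simp: positions_def split: if_splits)
    have v1: "valid_path T [i]" and vq: "valid_path (subtree_at T [i]) q"
      using v valid_path_append[of T "[i]" q] by simp_all
    have "nverts (graft T [i] T') + nverts (subtree_at T [i]) = n"
      using nverts_graft[OF v1, of T'] P by (simp add: ptree_pairs_def)
    then show "y \<in> ?B"
      using y v1 vq r rootdeg_graft_Cons[of T i "[]" T'] valid_path_singleton
      by (auto simp: positions_def ptree_pairs_def)
  qed
  show "(\<lambda>((T, T'), (i, q)). ((graft T [i] T', subtree_at T [i]), i # q)) ` ?B \<subseteq> ?A"
  proof
    fix y assume "y \<in> (\<lambda>((T, T'), (i, q)). ((graft T [i] T', subtree_at T [i]), i # q)) ` ?B"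
    then obtain T T' i q where y: "y = ((graft T [i] T', subtree_at T [i]), i # q)"
      and "i < k" and vq: "valid_path T' q" and P: "(T, T') \<in> ptree_pairs n" and r: "rootdeg T = k"
      by (auto simp: positions_def split: if_splits)
    then have v1: "valid_path T [i]" by (simp add: valid_path_singleton)
    have "nverts (graft T [i] T') + nverts (subtree_at T [i]) = n"
      using nverts_graft[OF v1, of T'] P by (simp add: ptree_pairs_def)
    moreover have "valid_path (graft T [i] T') (i # q)"
      using valid_path_graft[OF v1, of T' q] vq by simp
    ultimately show "y \<in> ?A"
      using y r rootdeg_graft_Cons[of T i "[]" T'] by (auto simp: positions_def ptree_pairs_def)
  qed
qed

lemma sum_ptree_pairs_nonroot:
  "(\<Sum>(T, T')\<in>ptree_pairs n. real (if rootdeg T = k then nverts T - 1 else 0) * (twt \<omega> T * twt \<omega> T')) =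
   (\<Sum>(T, T')\<in>ptree_pairs n. real (if rootdeg T = k then k * nverts T' else 0) * (twt \<omega> T * twt \<omega> T'))"
proof -
  have "(\<Sum>x\<in>ptree_pairs n. real (card (case x of (T, T') \<Rightarrow>
          if rootdeg T = k then positions T - {[]} else {})) * (case x of (T, T') \<Rightarrow> twt \<omega> T * twt \<omega> T')) =
      (\<Sum>x\<in>ptree_pairs n. real (card (case x of (T, T') \<Rightarrow>
          if rootdeg T = k then {..<k} \<times> positions T' else {})) * (case x of (T, T') \<Rightarrow> twt \<omega> T * twt \<omega> T'))"
  proof (rule sum_card_mult_eq_if_bij_Sigma[OF bij_betw_cut_at_child])
    fix y assume "y \<in> (SIGMA (T, T'):ptree_pairs n. if rootdeg T = k then positions T - {[]} else {})"
    then obtain T T' i q where y: "y = ((T, T'), i # q)" and "valid_path T (i # q)"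
      by (cases y; cases "snd y") (auto simp: positions_def split: if_splits)
    then have "valid_path T [i]" using valid_path_append[of T "[i]" q] by simp
    with y show "(case fst ((\<lambda>((T, T'), p). ((graft T [hd p] T', subtree_at T [hd p]), (hd p, tl p))) y) of
        (T, T') \<Rightarrow> twt \<omega> T * twt \<omega> T') = (case fst y of (T, T') \<Rightarrow> twt \<omega> T * twt \<omega> T')"
      using twt_graft[of T "[i]" \<omega> T'] by (simp add: mult.commute)
  qed (auto simp: finite_ptree_pairs)
  moreover have "card (if rootdeg T = k then positions T - {[]} else {}) =
      (if rootdeg T = k then nverts T - 1 else 0)" for T
    by (simp add: card_nonroot_positions)
  moreover have "card (if rootdeg T = k then {..<k} \<times> positions T' else {}) =
      (if rootdeg T = k then k * nverts T' else 0)" for T T'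
    by (simp add: card_positions card_cartesian_product)
  ultimately show ?thesis
    by (simp add: split_def)
qed

lemma convolution_eq_0_imp_eq_0:
  fixes D A :: "nat \<Rightarrow> 'a::idom"
  assumes conv: "\<And>n. (\<Sum>a\<le>n. D a * A (n - a)) = 0" and "A 0 = 0" and "A 1 \<noteq> 0"
  shows "D n = 0"
proof (induction n rule: less_induct)
  case (less n)
  have "0 = (\<Sum>a\<le>Suc n. D a * A (Suc n - a))"
    using conv by simp
  also have "\<dots> = (\<Sum>a<n. D a * A (Suc n - a)) + D n * A 1"
    using assms(2) by (simp add: lessThan_Suc_atMost[symmetric])
  also have "(\<Sum>a<n. D a * A (Suc n - a)) = 0"
    using less by simp
  finally show ?case
    using assms(3) by simp
qed

lemma sum_ptree_pairs_rerooting: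
  "(\<Sum>(T, T')\<in>ptree_pairs n. (real k * real (Ncount k T) - real (if rootdeg T = k then nverts T - 1 else 0))
      * (twt \<omega> T * twt \<omega> T')) = 0"
proof -
  have "(\<Sum>(T, T')\<in>ptree_pairs n. (real k * real (Ncount k T) - real (if rootdeg T = k then nverts T - 1 else 0))
      * (twt \<omega> T * twt \<omega> T')) =
    real k * (\<Sum>(T, T')\<in>ptree_pairs n. real (Ncount k T) * (twt \<omega> T * twt \<omega> T'))
      - (\<Sum>(T, T')\<in>ptree_pairs n. real (if rootdeg T = k then nverts T - 1 else 0) * (twt \<omega> T * twt \<omega> T'))"
    by (simp add: sum_subtractf sum_distrib_left split_def algebra_simps)
  also have "\<dots> = 0"
    unfolding sum_ptree_pairs_Ncount sum_ptree_pairs_nonroot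
    by (auto simp: sum_distrib_left split_def intro!: sum.cong)
  finally show ?thesis .
qed

lemma sum_twt_Ncount:
  assumes "\<omega> 0 \<noteq> 0"
  shows "(\<Sum>T\<in>ptrees n. twt \<omega> T * (real k * real (Ncount k T))) =
    (real n - 1) * (\<Sum>T\<in>{T \<in> ptrees n. rootdeg T = k}. twt \<omega> T)"
proof -
  define A where "A a = (\<Sum>T\<in>ptrees a. twt \<omega> T)" for a
  define d where "d T = real k * real (Ncount k T) - real (if rootdeg T = k then nverts T - 1 else 0)"
    for T
  define D where "D a = (\<Sum>T\<in>ptrees a. d T * twt \<omega> T)" for a
  have "(\<Sum>a\<le>m. D a * A (m - a)) = 0" for m
    unfolding D_def A_def d_def
    using sum_ptree_pairs_product[of "\<lambda>T. d T * twt \<omega> T" "twt \<omega>" m] sum_ptree_pairs_rerooting[where n = m and k = k and \<omega> = \<omega>]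
    by (simp add: d_def mult.assoc split_def)
  moreover have "A 0 = 0"
    by (simp add: A_def ptrees_0)
  moreover have "A 1 = \<omega> 0"
    using ptrees_1 by (simp add: A_def)
  ultimately have "D n = 0"
    using assms convolution_eq_0_imp_eq_0 by metis
  moreover have "(\<Sum>T\<in>ptrees n. real (if rootdeg T = k then nverts T - 1 else 0) * twt \<omega> T) =
      (real n - 1) * (\<Sum>T\<in>{T \<in> ptrees n. rootdeg T = k}. twt \<omega> T)"
  proof -
    have "real (nverts T - 1) = real n - 1" if "T \<in> ptrees n" for T
      using that nverts_ge_1[of T] by (simp add: ptrees_def of_nat_diff)
    then have "(\<Sum>T\<in>ptrees n. real (if rootdeg T = k then nverts T - 1 else 0) * twt \<omega> T) =
        (\<Sum>T\<in>ptrees n. (real n - 1) * (if rootdeg T = k then twt \<omega> T else 0))"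
      by (intro sum.cong) auto
    then show ?thesis
      by (simp add: sum.inter_filter[OF finite_ptrees] sum_distrib_left)
  qed
  moreover have "D n = (\<Sum>T\<in>ptrees n. twt \<omega> T * (real k * real (Ncount k T))) -
      (\<Sum>T\<in>ptrees n. real (if rootdeg T = k then nverts T - 1 else 0) * twt \<omega> T)"
    unfolding D_def d_def by (simp add: sum_subtractf left_diff_distrib right_diff_distrib mult.commute)
  ultimately show ?thesis
    by simp
qed

text \<open>\<open>\<Sum>\<^sub>k\<^sub>>\<^sub>K k N\<^sub>k\<close>, truncated at \<open>nverts T\<close>, beyond which \<open>N\<^sub>k = 0\<close>.\<close>

definition tail_degree_sum :: "nat \<Rightarrow> ptree \<Rightarrow> real" where
  "tail_degree_sum K T = (\<Sum>k\<in>{K<..nverts T}. real k * real (Ncount k T))"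

lemma sum_twt_tail_degree_sum:
  assumes "\<omega> 0 \<noteq> 0"
  shows "(\<Sum>T\<in>ptrees n. twt \<omega> T * tail_degree_sum K T) =
    (real n - 1) * (\<Sum>T\<in>{T \<in> ptrees n. K < rootdeg T}. twt \<omega> T)"
proof -
  have "(\<Sum>T\<in>ptrees n. twt \<omega> T * tail_degree_sum K T) =
      (\<Sum>k\<in>{K<..n}. \<Sum>T\<in>ptrees n. twt \<omega> T * (real k * real (Ncount k T)))"
    unfolding tail_degree_sum_def sum_distrib_left
    by (subst sum.swap) (rule sum.cong, auto simp: ptrees_def)
  also have "\<dots> = (real n - 1) * (\<Sum>k\<in>{K<..n}. \<Sum>T\<in>{T \<in> ptrees n. rootdeg T = k}. twt \<omega> T)"
    by (simp add: sum_twt_Ncount[where \<omega> = \<omega>, OF assms] sum_distrib_left)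
  also have "(\<Sum>k\<in>{K<..n}. \<Sum>T\<in>{T \<in> ptrees n. rootdeg T = k}. twt \<omega> T) =
      (\<Sum>T\<in>{T \<in> ptrees n. K < rootdeg T}. twt \<omega> T)"
  proof -
    have "(\<Sum>k\<in>{K<..n}. \<Sum>T\<in>{T \<in> ptrees n. rootdeg T = k}. twt \<omega> T) =
        (\<Sum>T\<in>ptrees n. \<Sum>k\<in>{K<..n}. if rootdeg T = k then twt \<omega> T else 0)"
      unfolding sum.inter_filter[OF finite_ptrees] by (rule sum.swap)
    also have "\<dots> = (\<Sum>T\<in>ptrees n. if K < rootdeg T then twt \<omega> T else 0)"
    proof (rule sum.cong)
      fix T assume "T \<in> ptrees n"
      then have "rootdeg T \<le> n"
        using rootdeg_less_nverts[of T] by (simp add: ptrees_def)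
      then show "(\<Sum>k\<in>{K<..n}. if rootdeg T = k then twt \<omega> T else 0) =
          (if K < rootdeg T then twt \<omega> T else 0)"
        by (simp add: sum.delta)
    qed simp
    finally show ?thesis
      by (simp add: sum.inter_filter finite_ptrees)
  qed
  finally show ?thesis .
qed

subsection \<open>Sizes of trees of positive weight\<close>

lemma nat_combination_if_gcd_dvd:
  fixes a b N :: nat
  assumes "0 < a" "0 < b" "gcd a b dvd N" "a * b \<le> N"
  shows "\<exists>x y. N = x * a + y * b"
proof -
  define d where "d = gcd a b"
  obtain x0 y0 where bezout: "a * x0 = b * y0 + d"
    using bezout_nat[of a b] assms(1) d_def by auto
  obtain q where q: "N = d * q" using assms(3) d_def by (auto elim: dvdE)
  obtain a' where a': "a = d * a'" using d_def by (metis gcd_dvd1 dvdE)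
  obtain b' where b': "b = d * b'" using d_def by (metis gcd_dvd2 dvdE)
  have "0 < d" using assms(1) d_def by simp
  have "0 < b'" using assms(2) b' by (simp add: gr0I)
  define x where "x = (q * x0) mod b'"
  define t where "t = (q * x0) div b'"
  have qx: "q * x0 = b' * t + x" unfolding x_def t_def by simp
  have "x * a < b' * a" using \<open>0 < b'\<close> assms(1) by (simp add: x_def)
  also have "b' * a = a' * b" using a' b' by simp
  also have "a' * b \<le> a * b" using a' \<open>0 < d\<close> by simp
  finally have xa: "x * a \<le> N" using assms(4) by linarith
  have "(b' * t + x) * a = q * (a * x0)" using qx by (metis mult.assoc mult.commute)
  also have "\<dots> = q * b * y0 + N" using bezout q by (simp add: algebra_simps)
  finally have "x * a + t * (a' * b) = q * b * y0 + N" using a' b' by (simp add: algebra_simps)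
  then have "(N - x * a) + (q * y0) * b = (t * a') * b" using xa by (simp add: algebra_simps)
  then have "b dvd N - x * a" by (metis dvd_add_left_iff dvd_triv_right)
  then obtain y where "N - x * a = b * y" by (auto elim: dvdE)
  then have "N = x * a + y * b" using xa by (simp add: algebra_simps)
  then show ?thesis by blast
qed

definition list_sums :: "nat set \<Rightarrow> nat set" where
  "list_sums S = {sum_list ds | ds. set ds \<subseteq> S}"

lemma list_sums_add:
  assumes "x \<in> list_sums S" "y \<in> list_sums S"
  shows "x + y \<in> list_sums S"
proof -
  obtain xs ys where "x = sum_list xs" "y = sum_list ys" "set xs \<subseteq> S" "set ys \<subseteq> S"
    using assms unfolding list_sums_def by blast
  then show ?thesis unfolding list_sums_def by (intro CollectI exI[of _ "xs @ ys"]) simp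
qed

lemma list_sums_mult: "a \<in> list_sums S \<Longrightarrow> m * a \<in> list_sums S"
proof (induction m)
  case 0
  show ?case unfolding list_sums_def by (intro CollectI exI[of _ "[]"]) simp
next
  case (Suc m)
  then show ?case by (simp add: list_sums_add)
qed

lemma subset_list_sums: "S \<subseteq> list_sums S"
  unfolding list_sums_def by (auto intro!: exI[of _ "[x]" for x])

lemma Gcd_multiples_in_list_sums_finite:
  assumes "finite F" "F \<noteq> {}" "F \<subseteq> list_sums S" "0 \<notin> F"
  shows "\<exists>N0. \<forall>m\<ge>N0. Gcd F * m \<in> list_sums S"
  using assms
proof (induction F rule: finite_ne_induct)
  case (singleton a)
  then show ?case using list_sums_mult[of a S] by (auto simp: mult.commute)
next
  case (insert b F)
  obtain N0 where N0: "\<forall>m\<ge>N0. Gcd F * m \<in> list_sums S" using insert by auto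
  have "\<not> F \<subseteq> {0}" using insert.hyps(2) insert.prems(2) by blast
  then have "0 < Gcd F" using Gcd_0_iff[of F] by linarith
  have "0 < b" "b \<in> list_sums S" using insert.prems by (auto simp: gr0I)
  \<comment> \<open>\<open>c\<close> is a multiple of \<open>Gcd F\<close> in \<open>list_sums S\<close> with \<open>gcd c b = gcd b (Gcd F)\<close>,
    so the two-generator case applies to \<open>c\<close> and \<open>b\<close>.\<close>
  define c where "c = Gcd F * (1 + b * N0)"
  have "coprime b (1 + b * N0)"
    using gcd_add_mult[of b N0 1] by (simp add: coprime_iff_gcd_eq_1 mult.commute)
  then have gc: "gcd c b = gcd b (Gcd F)"
    unfolding c_def by (subst gcd_mult_left_right_cancel) (simp_all add: gcd.commute)
  have "N0 \<le> b * N0" using \<open>0 < b\<close> by simp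
  then have "N0 \<le> 1 + b * N0" by linarith
  then have "c \<in> list_sums S" unfolding c_def using N0 by blast
  have "0 < c" unfolding c_def using \<open>0 < Gcd F\<close> by simp
  have "Gcd (insert b F) * m \<in> list_sums S" if "c * b \<le> m" for m
  proof -
    have "1 \<le> gcd b (Gcd F)" using \<open>0 < b\<close> by (simp add: Suc_le_eq)
    then have "m \<le> gcd b (Gcd F) * m" by simp
    then have "c * b \<le> gcd b (Gcd F) * m" using that by linarith
    moreover have "gcd c b dvd gcd b (Gcd F) * m" using gc by simp
    ultimately obtain x y where "gcd b (Gcd F) * m = x * c + y * b"
      using nat_combination_if_gcd_dvd[OF \<open>0 < c\<close> \<open>0 < b\<close>] by blast
    then show ?thesis
      using list_sums_add list_sums_mult \<open>c \<in> list_sums S\<close> \<open>b \<in> list_sums S\<close> by simp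
  qed
  then show ?case by blast
qed

lemma Gcd_multiples_in_list_sums:
  fixes S :: "nat set"
  assumes "S \<noteq> {}" "0 \<notin> S"
  shows "\<exists>N0. \<forall>m\<ge>N0. Gcd S * m \<in> list_sums S"
proof -
  \<comment> \<open>A least gcd of a finite nonempty subset of \<open>S\<close> divides every element of \<open>S\<close>,
    so \<open>Gcd S\<close> is already the gcd of a finite subset.\<close>
  define G where "G = {Gcd F | F. finite F \<and> F \<subseteq> S \<and> F \<noteq> {}}"
  obtain s where "s \<in> S" using assms(1) by auto
  then have "Gcd {s} \<in> G" unfolding G_def by (intro CollectI exI[of _ "{s}"]) simp
  define d where "d = (LEAST e. e \<in> G)"
  have d_min: "d \<le> e" if "e \<in> G" for e unfolding d_def using that by (rule Least_le)
  have "d \<in> G" unfolding d_def using \<open>Gcd {s} \<in> G\<close> by (rule LeastI)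
  then obtain F where F: "finite F" "F \<subseteq> S" "F \<noteq> {}" and dF: "d = Gcd F"
    unfolding G_def by blast
  have "\<not> F \<subseteq> {0}" using F assms(2) by blast
  then have "0 < d" using dF Gcd_0_iff[of F] by linarith
  have "d dvd x" if "x \<in> S" for x
  proof -
    have "Gcd (insert x F) \<in> G"
      unfolding G_def using F that by (intro CollectI exI[of _ "insert x F"]) simp
    then have "d \<le> gcd x d" using d_min dF by simp
    moreover have "gcd x d \<le> d" using \<open>0 < d\<close> by (simp add: gcd_le2_nat)
    ultimately have "gcd x d = d" by simp
    then show ?thesis using gcd_dvd1[of x d] by simp
  qed
  then have "d dvd Gcd S" by (simp add: Gcd_greatest)
  moreover have "Gcd S dvd d" unfolding dF using F(2) by (intro Gcd_greatest) (auto intro: Gcd_dvd)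
  ultimately have "Gcd S = d" by (simp add: dvd_antisym)
  moreover have "\<exists>N0. \<forall>m\<ge>N0. Gcd F * m \<in> list_sums S"
    using F assms subset_list_sums by (intro Gcd_multiples_in_list_sums_finite) auto
  ultimately show ?thesis using dF by simp
qed

fun spine :: "nat list \<Rightarrow> ptree" where
  "spine [] = Node []"
| "spine (d # ds) = Node (spine ds # replicate (d - 1) (Node []))"

lemma nverts_spine: "\<forall>d\<in>set ds. 0 < d \<Longrightarrow> nverts (spine ds) = 1 + sum_list ds"
proof (induction ds)
  case (Cons d ds)
  have "sum_list (map nverts (replicate r (Node []))) = r" for r
    by (induction r) auto
  with Cons show ?case by simp
qed simp

lemma twt_spine_pos:
  "0 < \<omega> 0 \<Longrightarrow> \<forall>d\<in>set ds. 0 < d \<and> 0 < \<omega> d \<Longrightarrow> 0 < twt \<omega> (spine ds)"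
proof (induction ds)
  case (Cons d ds)
  then have "Suc (d - 1) = d" by simp
  with Cons show ?case by (simp add: prod_list_replicate)
qed simp

lemma wspan_eq_Gcd: "weight_seq \<omega> \<Longrightarrow> wspan \<omega> = Gcd {d. 0 < d \<and> 0 < \<omega> d}"
proof -
  assume "weight_seq \<omega>"
  then have "{i. 0 < \<omega> i} = insert 0 {d. 0 < d \<and> 0 < \<omega> d}"
    by (auto simp: weight_seq_def)
  then show ?thesis by (simp add: wspan_def)
qed

lemma weight_seq_positive_outdegree: "weight_seq \<omega> \<Longrightarrow> \<exists>d. 0 < d \<and> 0 < \<omega> d"
  unfolding weight_seq_def by (metis not_numeral_le_zero gr0I)

lemma wspan_pos:
  assumes "weight_seq \<omega>"
  shows "0 < wspan \<omega>"
proof -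
  define S where "S = {d. 0 < d \<and> 0 < \<omega> d}"
  have "\<not> S \<subseteq> {0}"
    using weight_seq_positive_outdegree[OF assms] by (auto simp: S_def)
  then show ?thesis
    unfolding wspan_eq_Gcd[OF assms] S_def[symmetric] by (metis Gcd_0_iff gr0I)
qed

lemma eventually_sum_twt_pos:
  assumes "weight_seq \<omega>"
  shows "eventually (\<lambda>m. 0 < (\<Sum>T\<in>ptrees (wspan \<omega> * m + 1). twt \<omega> T)) sequentially"
proof -
  define S where "S = {d. 0 < d \<and> 0 < \<omega> d}"
  have "S \<noteq> {}" using weight_seq_positive_outdegree[OF assms] by (auto simp: S_def)
  then obtain N0 where N0: "\<forall>m\<ge>N0. wspan \<omega> * m \<in> list_sums S"
    using Gcd_multiples_in_list_sums[of S] assms by (auto simp: S_def wspan_eq_Gcd)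
  have "0 < (\<Sum>T\<in>ptrees (wspan \<omega> * m + 1). twt \<omega> T)" if m: "N0 \<le> m" for m
  proof -
    obtain ds where ds: "wspan \<omega> * m = sum_list ds" "set ds \<subseteq> S"
      using N0 m unfolding list_sums_def by blast
    moreover have "nverts (spine ds) = 1 + sum_list ds"
      using ds(2) by (intro nverts_spine) (auto simp: S_def)
    ultimately have "spine ds \<in> ptrees (wspan \<omega> * m + 1)"
      by (simp add: ptrees_def)
    moreover have "0 < twt \<omega> (spine ds)"
      using ds assms by (intro twt_spine_pos) (auto simp: S_def weight_seq_def)
    ultimately show ?thesis
      using assms twt_nonneg finite_ptrees
      by (intro sum_pos2) (auto simp: weight_seq_def)
  qed
  then show ?thesis by (auto simp: eventually_sequentially)
qed

lemma tprob_eq_sum_if: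
  "tprob \<omega> n P = (\<Sum>T\<in>ptrees n. if P T then twt \<omega> T else 0) / (\<Sum>T\<in>ptrees n. twt \<omega> T)"
  unfolding tprob_def by (simp add: sum.inter_filter finite_ptrees)

lemma tprob_split: "tprob \<omega> n P = tprob \<omega> n (\<lambda>T. P T \<and> Q T) + tprob \<omega> n (\<lambda>T. P T \<and> \<not> Q T)"
  unfolding tprob_eq_sum_if add_divide_distrib[symmetric] sum.distrib[symmetric]
  by (rule arg_cong2[where f = "(/)"], rule sum.cong) auto

lemma tprob_compl:
  assumes "0 < (\<Sum>T\<in>ptrees n. twt \<omega> T)"
  shows "tprob \<omega> n P = 1 - tprob \<omega> n (\<lambda>T. \<not> P T)"
proof -
  have "tprob \<omega> n P + tprob \<omega> n (\<lambda>T. \<not> P T) = (\<Sum>T\<in>ptrees n. twt \<omega> T) / (\<Sum>T\<in>ptrees n. twt \<omega> T)"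
    unfolding tprob_eq_sum_if add_divide_distrib[symmetric] sum.distrib[symmetric]
    by (rule arg_cong2[where f = "(/)"], rule sum.cong) auto
  then show ?thesis using assms by simp
qed

lemma tprob_mono:
  assumes "\<And>k. 0 \<le> \<omega> k" "\<And>T. T \<in> ptrees n \<Longrightarrow> P T \<Longrightarrow> Q T"
  shows "tprob \<omega> n P \<le> tprob \<omega> n Q"
  unfolding tprob_eq_sum_if
  by (rule divide_right_mono, rule sum_mono) (use assms twt_nonneg in \<open>auto intro: sum_nonneg\<close>)

lemma tprob_nonneg: "(\<And>k. 0 \<le> \<omega> k) \<Longrightarrow> 0 \<le> tprob \<omega> n P"
  unfolding tprob_eq_sum_if using twt_nonneg by (auto intro!: divide_nonneg_nonneg sum_nonneg)

lemma rootdeg_le_tail_degree_sum: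
  assumes "K < rootdeg T"
  shows "real (rootdeg T) \<le> tail_degree_sum K T"
proof -
  have "1 \<le> Ncount (rootdeg T) T" by (cases T) auto
  then have "real (rootdeg T) \<le> real (rootdeg T) * real (Ncount (rootdeg T) T)"
    by (simp add: mult_le_cancel_left1)
  also have "\<dots> \<le> tail_degree_sum K T"
    unfolding tail_degree_sum_def
    by (rule member_le_sum) (use assms rootdeg_less_nverts[of T] in auto)
  finally show ?thesis .
qed

lemma tail_degree_sum_nonneg: "0 \<le> tail_degree_sum K T"
  unfolding tail_degree_sum_def by (auto intro: sum_nonneg)

text \<open>A Markov-type bound: the mean of \<open>tail_degree_sum K\<close> is \<open>(n - 1) P(d\<^sup>+(o) > K)\<close>.\<close>

lemma tprob_tail_degree_sum_le_rootdeg_gt: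
  assumes "\<And>k. 0 \<le> \<omega> k" "\<omega> 0 \<noteq> 0" "0 \<le> c"
  shows "c * tprob \<omega> n (\<lambda>T. c * real n \<le> tail_degree_sum K T) \<le> tprob \<omega> n (\<lambda>T. K < rootdeg T)"
proof (cases "n = 0")
  case True
  then show ?thesis by (simp add: tprob_def ptrees_0)
next
  case False
  define G where "G = (\<Sum>T\<in>ptrees n. if c * real n \<le> tail_degree_sum K T then twt \<omega> T else 0)"
  define R where "R = (\<Sum>T\<in>{T \<in> ptrees n. K < rootdeg T}. twt \<omega> T)"
  have "0 \<le> R" unfolding R_def using assms(1) twt_nonneg by (auto intro: sum_nonneg)
  have "c * real n * G \<le> (\<Sum>T\<in>ptrees n. twt \<omega> T * tail_degree_sum K T)"
    unfolding G_def sum_distrib_left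
  proof (rule sum_mono)
    fix T
    have "0 \<le> twt \<omega> T" using assms(1) by (rule twt_nonneg)
    then show "c * real n * (if c * real n \<le> tail_degree_sum K T then twt \<omega> T else 0)
        \<le> twt \<omega> T * tail_degree_sum K T"
      using tail_degree_sum_nonneg[of K T] by (auto simp: mult.commute mult_left_mono)
  qed
  also have "\<dots> = (real n - 1) * R"
    unfolding R_def using assms(2) by (rule sum_twt_tail_degree_sum)
  also have "\<dots> \<le> real n * R"
    using \<open>0 \<le> R\<close> by (simp add: mult_right_mono)
  finally have "c * G \<le> R"
    using False by (simp add: mult.assoc)
  then show ?thesis
    unfolding tprob_eq_sum_if G_def[symmetric] times_divide_eq_right[symmetric]
    using assms(1) twt_nonneg
    by (auto simp: R_def sum.inter_filter finite_ptrees intro!: divide_right_mono sum_nonneg)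
qed

lemma tprob_rootdeg_gt_lower_bound:
  assumes "\<And>k. 0 \<le> \<omega> k" "\<omega> 0 \<noteq> 0" "0 \<le> a" "0 < (\<Sum>T\<in>ptrees n. twt \<omega> T)"
  shows "a / 2 * (1 - tprob \<omega> n (\<lambda>T. a / 2 * real n < \<bar>tail_degree_sum K T - a * real n\<bar>))
    \<le> tprob \<omega> n (\<lambda>T. K < rootdeg T)"
proof -
  have "tprob \<omega> n (\<lambda>T. \<not> a / 2 * real n \<le> tail_degree_sum K T)
      \<le> tprob \<omega> n (\<lambda>T. a / 2 * real n < \<bar>tail_degree_sum K T - a * real n\<bar>)"
  proof (rule tprob_mono[OF assms(1)])
    fix T assume "\<not> a / 2 * real n \<le> tail_degree_sum K T"
    then show "a / 2 * real n < \<bar>tail_degree_sum K T - a * real n\<bar>"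
      using abs_ge_minus_self[of "tail_degree_sum K T - a * real n"] by linarith
  qed
  then have "1 - tprob \<omega> n (\<lambda>T. a / 2 * real n < \<bar>tail_degree_sum K T - a * real n\<bar>)
      \<le> tprob \<omega> n (\<lambda>T. a / 2 * real n \<le> tail_degree_sum K T)"
    using tprob_compl[OF assms(4), of "\<lambda>T. a / 2 * real n \<le> tail_degree_sum K T"] by linarith
  then have "a / 2 * (1 - tprob \<omega> n (\<lambda>T. a / 2 * real n < \<bar>tail_degree_sum K T - a * real n\<bar>))
      \<le> a / 2 * tprob \<omega> n (\<lambda>T. a / 2 * real n \<le> tail_degree_sum K T)"
    using assms(3) by (intro mult_left_mono) auto
  also have "\<dots> \<le> tprob \<omega> n (\<lambda>T. K < rootdeg T)"
    using assms(1-3) by (intro tprob_tail_degree_sum_le_rootdeg_gt) auto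
  finally show ?thesis .
qed

lemma tprob_rootdeg_beyond_le:
  assumes "\<And>k. 0 \<le> \<omega> k"
  shows "tprob \<omega> n (\<lambda>T. K < rootdeg T \<and> \<not> real (rootdeg T) \<le> (a + e) * real n)
    \<le> tprob \<omega> n (\<lambda>T. e * real n < \<bar>tail_degree_sum K T - a * real n\<bar>)"
proof (rule tprob_mono[OF assms])
  fix T assume "K < rootdeg T \<and> \<not> real (rootdeg T) \<le> (a + e) * real n"
  then show "e * real n < \<bar>tail_degree_sum K T - a * real n\<bar>"
    using rootdeg_le_tail_degree_sum[of K T] by (auto simp: algebra_simps)
qed

lemma eventually_diagonal:
  assumes "\<And>j::nat. eventually (P j) sequentially"
  shows "\<exists>J::nat \<Rightarrow> nat. filterlim J at_top sequentially \<and> eventually (\<lambda>m. P (J m) m) sequentially"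
proof -
  obtain N where N: "\<And>j m. N j \<le> m \<Longrightarrow> P j m"
    using assms unfolding eventually_sequentially by metis
  \<comment> \<open>\<open>N'\<close> is a strictly increasing majorant of \<open>N\<close>; \<open>J m\<close> is the last \<open>j\<close> with \<open>N' j \<le> m\<close>.\<close>
  define N' where "N' j = (\<Sum>i\<le>j. N i) + j" for j
  have "N j \<le> N' j" for j
    unfolding N'_def using member_le_sum[of j "{..j}" N] by simp
  have "j \<le> N' j" for j unfolding N'_def by simp
  define J where "J m = Max {j. N' j \<le> m}" for m
  have fin: "finite {j. N' j \<le> m}" for m
    by (rule finite_subset[of _ "{..m}"]) (use \<open>\<And>j. j \<le> N' j\<close> in \<open>auto intro: le_trans\<close>)
  have "N' (J m) \<le> m" if "N' 0 \<le> m" for m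
  proof -
    have "{j. N' j \<le> m} \<noteq> {}" using that by auto
    then show ?thesis unfolding J_def using Max_in[OF fin] by blast
  qed
  then have "eventually (\<lambda>m. P (J m) m) sequentially"
    unfolding eventually_sequentially using N \<open>\<And>j. N j \<le> N' j\<close> le_trans by blast
  moreover have "j \<le> J m" if "N' j \<le> m" for j m
    unfolding J_def using that fin by (intro Max_ge) auto
  then have "filterlim J at_top sequentially"
    unfolding filterlim_at_top eventually_sequentially by blast
  ultimately show ?thesis by blast
qed

lemma tendsto_inverse_Suc_0:
  assumes "filterlim (J :: 'a \<Rightarrow> nat) at_top F"
  shows "((\<lambda>x. 1 / (real (J x) + 1)) \<longlongrightarrow> 0) F"
proof -
  have "filterlim (\<lambda>x. 1 + real (J x)) at_top F"
    by (rule filterlim_tendsto_add_at_top[OF tendsto_const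
          filterlim_compose[OF filterlim_real_sequentially assms]])
  from tendsto_inverse_0_at_top[OF this] show ?thesis
    by (simp add: inverse_eq_divide add.commute)
qed

lemma LIMSEQ_pred_div_reindex:
  assumes "X \<longlonglongrightarrow> L" "0 < g"
  shows "(\<lambda>k. X ((k - 1) div g)) \<longlonglongrightarrow> L"
proof -
  have "filterlim (\<lambda>k. (k - 1) div g) at_top sequentially"
    using filterlim_compose[OF filterlim_at_top_div_const_nat[OF assms(2)] filterlim_minus_const_nat_at_top] .
  with assms(1) show ?thesis
    by (rule filterlim_compose)
qed

lemma tendsto_0_diagonal:
  fixes f :: "real \<Rightarrow> nat \<Rightarrow> real"
  assumes "\<And>\<epsilon>. 0 < \<epsilon> \<Longrightarrow> f \<epsilon> \<longlonglongrightarrow> 0"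
  shows "\<exists>e. e \<longlonglongrightarrow> 0 \<and> eventually (\<lambda>m. f (e m) m < e m) sequentially"
proof -
  have "eventually (\<lambda>m. f (1 / (real j + 1)) m < 1 / (real j + 1)) sequentially" for j :: nat
    using assms[of "1 / (real j + 1)"] by (rule order_tendstoD) simp_all
  then obtain J where "filterlim J at_top sequentially"
    and "eventually (\<lambda>m. f (1 / (real (J m) + 1)) m < 1 / (real (J m) + 1)) sequentially"
    using eventually_diagonal[of "\<lambda>j m. f (1 / (real j + 1)) m < 1 / (real j + 1)"] by blast
  then show ?thesis
    using tendsto_inverse_Suc_0 by blast
qed

lemma tendsto_1_minus_ratio:
  fixes q b e :: "'a \<Rightarrow> real"
  assumes "0 < \<delta>" "eventually (\<lambda>m. \<delta> \<le> q m) F"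
    and "eventually (\<lambda>m. 0 \<le> b m \<and> b m \<le> e m) F" "(e \<longlongrightarrow> 0) F"
  shows "((\<lambda>m. (q m - b m) / q m) \<longlongrightarrow> 1) F"
proof -
  have "((\<lambda>m. b m / q m) \<longlongrightarrow> 0) F"
  proof (rule tendsto_sandwich[where f = "\<lambda>_. 0" and h = "\<lambda>m. e m / \<delta>"])
    show "eventually (\<lambda>m. 0 \<le> b m / q m) F"
      using assms(2,3) by eventually_elim (use assms(1) in auto)
    show "eventually (\<lambda>m. b m / q m \<le> e m / \<delta>) F"
      using assms(2,3)
    proof eventually_elim
      case (elim m)
      then have "b m / q m \<le> b m / \<delta>" using assms(1) by (intro divide_left_mono) auto
      also have "\<dots> \<le> e m / \<delta>" using elim assms(1) by (intro divide_right_mono) auto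
      finally show ?case .
    qed
    show "((\<lambda>m. e m / \<delta>) \<longlongrightarrow> 0) F"
      using tendsto_divide_zero[OF assms(4)] by simp
  qed simp
  then have "((\<lambda>m. 1 - b m / q m) \<longlongrightarrow> 1 - 0) F"
    by (intro tendsto_diff tendsto_const)
  moreover have "eventually (\<lambda>m. 1 - b m / q m = (q m - b m) / q m) F"
    using assms(2) by eventually_elim (use assms(1) in \<open>simp add: diff_divide_distrib\<close>)
  ultimately show ?thesis
    using Lim_transform_eventually by fastforce
qed

subsection \<open>The conditioned root degree\<close>

lemma eventually_tprob_rootdeg_gt_ge:
  assumes "\<And>k. 0 \<le> \<omega> k" "\<omega> 0 \<noteq> 0" "0 < a"
    and "eventually (\<lambda>m. 0 < (\<Sum>T\<in>ptrees (n m). twt \<omega> T)) sequentially"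
    and "(\<lambda>m. tprob \<omega> (n m) (\<lambda>T. a / 2 * real (n m) < \<bar>tail_degree_sum (K m) T - a * real (n m)\<bar>))
      \<longlonglongrightarrow> 0"
  shows "eventually (\<lambda>m. a / 4 \<le> tprob \<omega> (n m) (\<lambda>T. K m < rootdeg T)) sequentially"
proof -
  have "eventually (\<lambda>m. tprob \<omega> (n m)
      (\<lambda>T. a / 2 * real (n m) < \<bar>tail_degree_sum (K m) T - a * real (n m)\<bar>) < 1 / 2) sequentially"
    using assms(5) by (rule order_tendstoD) simp
  with assms(4) show ?thesis
  proof eventually_elim
  case (elim m)
  have "a / 2 * (1 / 2)
      \<le> a / 2 * (1 - tprob \<omega> (n m) (\<lambda>T. a / 2 * real (n m) < \<bar>tail_degree_sum (K m) T - a * real (n m)\<bar>))"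
    using elim assms(3) by (intro mult_left_mono) auto
  also have "\<dots> \<le> tprob \<omega> (n m) (\<lambda>T. K m < rootdeg T)"
    using assms(1-3) elim by (intro tprob_rootdeg_gt_lower_bound) auto
  finally show ?case by simp
  qed
qed

lemma tendsto_conditional_tprob_rootdeg_le:
  assumes "\<And>k. 0 \<le> \<omega> k" "0 < \<delta>"
    and "eventually (\<lambda>m. \<delta> \<le> tprob \<omega> (n m) (\<lambda>T. K m < rootdeg T)) sequentially"
    and "e \<longlonglongrightarrow> 0"
    and "eventually (\<lambda>m. tprob \<omega> (n m)
      (\<lambda>T. e m * real (n m) < \<bar>tail_degree_sum (K m) T - a * real (n m)\<bar>) < e m) sequentially"
  shows "(\<lambda>m. tprob \<omega> (n m) (\<lambda>T. K m < rootdeg T \<and> real (rootdeg T) \<le> (a + e m) * real (n m))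
    / tprob \<omega> (n m) (\<lambda>T. K m < rootdeg T)) \<longlonglongrightarrow> 1"
proof -
  define q where "q m = tprob \<omega> (n m) (\<lambda>T. K m < rootdeg T)" for m
  define b where "b m = tprob \<omega> (n m)
      (\<lambda>T. K m < rootdeg T \<and> \<not> real (rootdeg T) \<le> (a + e m) * real (n m))" for m
  have b_le: "b m \<le> tprob \<omega> (n m) (\<lambda>T. e m * real (n m) < \<bar>tail_degree_sum (K m) T - a * real (n m)\<bar>)"
    for m unfolding b_def by (rule tprob_rootdeg_beyond_le[OF assms(1)])
  have b_nonneg: "0 \<le> b m" for m
    unfolding b_def by (rule tprob_nonneg[OF assms(1)])
  have "eventually (\<lambda>m. 0 \<le> b m \<and> b m \<le> e m) sequentially"
    using assms(5) by eventually_elim (use b_le b_nonneg in \<open>fastforce intro: order_trans\<close>)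
  then have "(\<lambda>m. (q m - b m) / q m) \<longlonglongrightarrow> 1"
    using tendsto_1_minus_ratio[where q = q and b = b and e = e] assms(2-4) unfolding q_def by blast
  moreover have "q m - b m =
      tprob \<omega> (n m) (\<lambda>T. K m < rootdeg T \<and> real (rootdeg T) \<le> (a + e m) * real (n m))" for m
    using tprob_split[of \<omega> "n m" "\<lambda>T. K m < rootdeg T" "\<lambda>T. real (rootdeg T) \<le> (a + e m) * real (n m)"]
    unfolding q_def b_def by simp
  ultimately show ?thesis
    unfolding q_def by simp
qed

theorem lemma6p3:
  fixes \<omega> :: "nat \<Rightarrow> real" and \<mu> :: real and \<Omega> :: "nat \<Rightarrow> nat"
  assumes w: "weight_seq \<omega>"
    and wtype: "typeII_nu \<omega> \<mu> \<or> (typeIII \<omega> \<and> \<mu> = 0)"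
    and Om_inf: "filterlim \<Omega> at_top sequentially"
    and Om_small: "(\<lambda>n. real (\<Omega> n) / real n) \<longlonglongrightarrow> 0"
    and Om_low: "\<And>K::nat \<Rightarrow> nat. filterlim K at_top sequentially \<Longrightarrow> (\<forall>n. K n \<le> \<Omega> n) \<Longrightarrow>
        (\<forall>\<epsilon>>0. (\<lambda>m. tprob \<omega> (wspan \<omega> * m + 1)
            (\<lambda>T. \<bar>(\<Sum>k\<le>K (wspan \<omega> * m + 1). real k * real (Ncount k T))
                   - \<mu> * real (wspan \<omega> * m + 1)\<bar> > \<epsilon> * real (wspan \<omega> * m + 1)))
          \<longlonglongrightarrow> 0)"
    and Om_high: "\<And>K::nat \<Rightarrow> nat. filterlim K at_top sequentially \<Longrightarrow> (\<forall>n. K n \<le> \<Omega> n) \<Longrightarrow>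
        (\<forall>\<epsilon>>0. (\<lambda>m. tprob \<omega> (wspan \<omega> * m + 1)
            (\<lambda>T. \<bar>(\<Sum>k\<in>{K (wspan \<omega> * m + 1)<..nverts T}. real k * real (Ncount k T))
                   - (1 - \<mu>) * real (wspan \<omega> * m + 1)\<bar> > \<epsilon> * real (wspan \<omega> * m + 1)))
          \<longlonglongrightarrow> 0)"
  shows "\<exists>t::nat \<Rightarrow> real. t \<longlonglongrightarrow> 0 \<and>
    (\<lambda>m. let n = wspan \<omega> * m + 1 in
        tprob \<omega> n (\<lambda>T. \<Omega> n < rootdeg T \<and> real (rootdeg T) \<le> (1 - \<mu> + t n) * real n)
        / tprob \<omega> n (\<lambda>T. \<Omega> n < rootdeg T)) \<longlonglongrightarrow> 1"
proof -
  have nonneg: "\<And>k. 0 \<le> \<omega> k" and "\<omega> 0 \<noteq> 0" and "\<mu> < 1"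
    using w wtype by (auto simp: weight_seq_def typeII_nu_def)
  define n where "n m = wspan \<omega> * m + 1" for m
  define f where "f \<epsilon> m = tprob \<omega> (n m)
      (\<lambda>T. \<epsilon> * real (n m) < \<bar>tail_degree_sum (\<Omega> (n m)) T - (1 - \<mu>) * real (n m)\<bar>)" for \<epsilon> m
  have f_0: "f \<epsilon> \<longlonglongrightarrow> 0" if "0 < \<epsilon>" for \<epsilon>
    using Om_high[OF Om_inf] that unfolding f_def n_def tail_degree_sum_def by auto
  have q_ge: "eventually (\<lambda>m. (1 - \<mu>) / 4 \<le> tprob \<omega> (n m) (\<lambda>T. \<Omega> (n m) < rootdeg T)) sequentially"
    using eventually_tprob_rootdeg_gt_ge[where \<omega> = \<omega>, OF nonneg \<open>\<omega> 0 \<noteq> 0\<close>] eventually_sum_twt_pos[OF w]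
      f_0[of "(1 - \<mu>) / 2"] \<open>\<mu> < 1\<close> unfolding n_def f_def by simp
  obtain e where "e \<longlonglongrightarrow> 0" and e: "eventually (\<lambda>m. f (e m) m < e m) sequentially"
    using tendsto_0_diagonal[of f] f_0 by auto
  define t where "t k = e ((k - 1) div wspan \<omega>)" for k
  have "t \<longlonglongrightarrow> 0"
    unfolding t_def using \<open>e \<longlonglongrightarrow> 0\<close> wspan_pos[OF w] by (rule LIMSEQ_pred_div_reindex)
  have "t (n m) = e m" for m
    using wspan_pos[OF w] by (simp add: t_def n_def)
  moreover have "(\<lambda>m. tprob \<omega> (n m) (\<lambda>T. \<Omega> (n m) < rootdeg T \<and>
        real (rootdeg T) \<le> (1 - \<mu> + e m) * real (n m)) / tprob \<omega> (n m) (\<lambda>T. \<Omega> (n m) < rootdeg T))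
      \<longlonglongrightarrow> 1"
    by (rule tendsto_conditional_tprob_rootdeg_le[where \<omega> = \<omega> and \<delta> = "(1 - \<mu>) / 4", OF nonneg _ q_ge
          \<open>e \<longlonglongrightarrow> 0\<close> e[unfolded f_def]])
      (use \<open>\<mu> < 1\<close> in simp)
  ultimately show ?thesis
    using \<open>t \<longlonglongrightarrow> 0\<close> unfolding Let_def n_def[symmetric] by auto
qed

end
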